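(* For every integer $k\ge2$, every integer constant $c\ge 1$ and every $h>1/k$, there is an instance with $k$ groups of binary agents in which no allocation is $h$-democratic EF$c$.
   Context: There is a finite set $G$ of goods and $k$ groups $A_1,\dots,A_k$ with $n_i\ge1$ agents in $A_i$. A binary agent has an additive utility with $u_a(\{g\})\in\{0,1\}$. An allocation is a partition $(G_1,\dots,G_k)$ of $G$; agents of $A_i$ get $u_a(G_i)$. It is EF$c$ for $a\in A_i$ if for every $i'$ there is $C\subseteq G_{i'}$, $|C|\le c$, with $u_a(G_i)\ge u_a(G_{i'}\setminus C)$. An allocation is $h$-democratic EF$c$ if for each $i$ at least $h\cdot n_i$ agents of $A_i$ find it EF$c$. *)

theory Defs
  imports Complex_Main
begin

(* Instance: goods are a finite set G of naturals; groups are indexed 0..<k;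
  group i has agent set A i; u i a g is the (binary) utility of agent a of group i
  for good g. *)

definition grp_bundle :: "nat set \<Rightarrow> (nat \<Rightarrow> nat) \<Rightarrow> nat \<Rightarrow> nat set" where
  "grp_bundle G alloc i = {g \<in> G. alloc g = i}"

definition is_allocation :: "nat set \<Rightarrow> nat \<Rightarrow> (nat \<Rightarrow> nat) \<Rightarrow> bool" where
  "is_allocation G k alloc \<longleftrightarrow> (\<forall>g\<in>G. alloc g < k)"

definition binary_instance ::
  "nat set \<Rightarrow> nat \<Rightarrow> (nat \<Rightarrow> nat set) \<Rightarrow> (nat \<Rightarrow> nat \<Rightarrow> nat \<Rightarrow> nat) \<Rightarrow> bool" where
  "binary_instance G k A u \<longleftrightarrow> finite G \<and>
     (\<forall>i<k. finite (A i) \<and> A i \<noteq> {}) \<and>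
     (\<forall>i<k. \<forall>a\<in>A i. \<forall>g\<in>G. u i a g \<in> {0, 1})"

definition EFc_agent ::
  "nat set \<Rightarrow> nat \<Rightarrow> (nat \<Rightarrow> nat \<Rightarrow> nat \<Rightarrow> nat) \<Rightarrow> (nat \<Rightarrow> nat) \<Rightarrow> nat \<Rightarrow> nat \<Rightarrow> nat \<Rightarrow> bool" where
  "EFc_agent G k u alloc c i a \<longleftrightarrow>
     (\<forall>i'<k. \<exists>C \<subseteq> grp_bundle G alloc i'. card C \<le> c \<and>
        sum (u i a) (grp_bundle G alloc i' - C) \<le> sum (u i a) (grp_bundle G alloc i))"

definition h_democratic_EFc ::
  "nat set \<Rightarrow> nat \<Rightarrow> (nat \<Rightarrow> nat set) \<Rightarrow> (nat \<Rightarrow> nat \<Rightarrow> nat \<Rightarrow> nat) \<Rightarrow> real \<Rightarrow> nat \<Rightarrow> (nat \<Rightarrow> nat) \<Rightarrow> bool" where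
  "h_democratic_EFc G k A u h c alloc \<longleftrightarrow>
     (\<forall>i<k. real (card {a \<in> A i. EFc_agent G k u alloc c i a}) \<ge> h * real (card (A i)))"

end

theory Submission
  imports Defs "HOL-Library.Nat_Bijection"
begin

text \<open>Take as goods \<open>G = {..<k N}\<close> and let every group consist of one agent for each subset
  \<open>S \<subseteq> G\<close>, valuing exactly the goods in \<open>S\<close>. Given an allocation with bundles \<open>B i\<close>, the agent
  \<open>S\<close> of group \<open>i\<close> is EF\<open>c\<close> iff \<open>|S \<inter> B i'| \<le> |S \<inter> B i| + c\<close> for all \<open>i'\<close>. A subset serving in this
  way two groups \<open>i \<noteq> j\<close> has \<open>|S \<inter> B i|\<close> within \<open>c\<close> of \<open>|S \<inter> B j|\<close>; if one of the two bundles
  is large this is an event of vanishing probability because binomial coefficients are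
  \<open>o(2\<^sup>n)\<close>, and if both are small then \<open>|S \<inter> B p|\<close> must be small for a bundle \<open>B p\<close> with at
  least \<open>N\<close> goods, again unlikely. Hence almost every subset serves at most one group, so the
  groups together have only about \<open>2\<^sup>|G|\<close> EF\<open>c\<close> agents out of \<open>k 2\<^sup>|G|\<close>, and some group has
  less than an \<open>h\<close>-fraction of them once \<open>h > 1/k\<close>.\<close>

lemma central_binomial_Suc:
  "(2 * Suc r choose Suc r) * Suc r = 2 * (2 * r + 1) * (2 * r choose r)"
proof -
  define D X C where "D = 2 * Suc r choose Suc r" and "X = Suc (2 * r) choose r"
    and "C = 2 * r choose r"
  have a: "D * Suc r = 2 * Suc r * X"
    using Suc_times_binomial_eq[of "Suc (2 * r)" r] by (simp add: D_def X_def)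
  have b: "X * Suc r = (2 * r + 1) * C"
    using Suc_times_binomial_eq[of "2 * r" r] binomial_symmetric[of r "Suc (2 * r)"]
    by (simp add: X_def C_def)
  have "Suc r * (D * Suc r) = 2 * Suc r * (X * Suc r)"
    unfolding a by (simp only: ac_simps)
  also have "\<dots> = Suc r * (2 * (2 * r + 1) * C)"
    unfolding b by (simp only: ac_simps)
  finally have "Suc r * (D * Suc r) = Suc r * (2 * (2 * r + 1) * C)" .
  then have "D * Suc r = 2 * (2 * r + 1) * C"
    by (simp only: mult_cancel1) simp
  then show ?thesis unfolding D_def C_def .
qed

lemma central_binomial_sq_bound: "(2 * r choose r)\<^sup>2 * (2 * r + 1) \<le> (16::nat) ^ r"
proof (induction r)
  case 0
  then show ?case by simp
next
  case (Suc r)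
  define C D where "C = 2 * r choose r" and "D = 2 * Suc r choose Suc r"
  have DC: "D * Suc r = 2 * (2 * r + 1) * C"
    unfolding C_def D_def by (rule central_binomial_Suc)
  have "D\<^sup>2 * (2 * Suc r + 1) * (Suc r)\<^sup>2 = (D * Suc r)\<^sup>2 * (2 * r + 3)"
    by (simp add: power2_eq_square algebra_simps)
  also have "\<dots> = 4 * (2 * r + 1) * (2 * r + 3) * (C\<^sup>2 * (2 * r + 1))"
    unfolding DC by (simp add: power2_eq_square algebra_simps)
  also have "\<dots> \<le> 4 * (4 * (Suc r)\<^sup>2) * 16 ^ r"
  proof (rule mult_mono)
    show "4 * (2 * r + 1) * (2 * r + 3) \<le> 4 * (4 * (Suc r)\<^sup>2)"
      by (simp add: power2_eq_square algebra_simps)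
  qed (use Suc.IH in \<open>simp_all add: C_def\<close>)
  finally show ?case by (simp add: D_def mult.assoc)
qed

lemma binomial_sq_mult_le: "(n choose l)\<^sup>2 * n \<le> (4::nat) ^ n"
proof -
  have "(n choose l)\<^sup>2 * n \<le> (n choose (n div 2))\<^sup>2 * n"
    using binomial_maximum by (simp add: power_mono)
  also have "\<dots> \<le> 4 ^ n"
  proof (cases "even n")
    case True
    then obtain r where n: "n = 2 * r" by blast
    have "(n choose (n div 2))\<^sup>2 * n \<le> (2 * r choose r)\<^sup>2 * (2 * r + 1)"
      using n by simp
    also have "\<dots> \<le> 16 ^ r" by (rule central_binomial_sq_bound)
    finally show ?thesis using n by (simp add: power_mult)
  next
    case False
    then obtain r where n: "n = 2 * r + 1" by (metis oddE)
    have le: "n choose (n div 2) \<le> 2 * (2 * r choose r)"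
    proof (cases r)
      case (Suc q)
      have "n choose (n div 2) = (2 * r choose q) + (2 * r choose r)"
        using n Suc binomial_Suc_Suc[of "2 * r" q] by simp
      also have "2 * r choose q \<le> 2 * r choose r"
        using binomial_maximum'[of r q] by simp
      finally show ?thesis by simp
    qed (use n in simp)
    have "(n choose (n div 2))\<^sup>2 * n \<le> (2 * (2 * r choose r))\<^sup>2 * (2 * r + 1)"
      using le n by (intro mult_mono power_mono) auto
    also have "\<dots> = 4 * ((2 * r choose r)\<^sup>2 * (2 * r + 1))" by (simp add: power2_eq_square)
    also have "\<dots> \<le> 4 * 16 ^ r" by (rule mult_le_mono2[OF central_binomial_sq_bound])
    finally show ?thesis using n by (simp add: power_mult)
  qed
  finally show ?thesis .
qed

lemma binomial_le_fraction_of_power2: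
  assumes "0 < d"
  shows "\<exists>L. \<forall>n\<ge>L. \<forall>l. real (n choose l) \<le> d * 2 ^ n"
proof -
  obtain L :: nat where L: "1 / d\<^sup>2 < real L" using reals_Archimedean2 by blast
  have "real (n choose l) \<le> d * 2 ^ n" if "L \<le> n" for n l
  proof -
    have "1 / d\<^sup>2 < real n" using L that by (simp add: order.strict_trans2)
    then have large: "1 < d\<^sup>2 * real n"
      using assms by (simp add: divide_less_eq mult.commute)
    then have "0 < real n" by (cases "n = 0") auto
    have "real ((n choose l)\<^sup>2 * n) \<le> real (4 ^ n)"
      using binomial_sq_mult_le by (rule of_nat_mono)
    then have "(real (n choose l))\<^sup>2 * real n \<le> 4 ^ n" by simp
    also have "\<dots> \<le> 4 ^ n * (d\<^sup>2 * real n)" using large by simp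
    also have "\<dots> = (d * 2 ^ n)\<^sup>2 * real n"
    proof -
      have "(d * 2 ^ n)\<^sup>2 = d\<^sup>2 * 4 ^ n"
        by (simp add: power_mult_distrib power2_eq_square flip: power_mult_distrib)
      then show ?thesis by (simp only: ac_simps)
    qed
    finally have "(real (n choose l))\<^sup>2 \<le> (d * 2 ^ n)\<^sup>2" using \<open>0 < real n\<close> by simp
    then show ?thesis by (rule power2_le_imp_le) (use assms in simp)
  qed
  then show ?thesis by blast
qed

lemma card_subsets_card_in:
  assumes "finite D" "finite V"
  shows "card {U. U \<subseteq> D \<and> card U \<in> V} \<le> (\<Sum>l\<in>V. card D choose l)"
proof -
  have "{U. U \<subseteq> D \<and> card U \<in> V} = (\<Union>l\<in>V. {U. U \<subseteq> D \<and> card U = l})" by auto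
  then have "card {U. U \<subseteq> D \<and> card U \<in> V} \<le> (\<Sum>l\<in>V. card {U. U \<subseteq> D \<and> card U = l})"
    using card_UN_le[OF assms(2)] by simp
  also have "\<dots> = (\<Sum>l\<in>V. card D choose l)" using n_subsets[OF assms(1)] by simp
  finally show ?thesis .
qed

text \<open>Anti-concentration: for fixed \<open>S - D\<close>, the part \<open>S \<inter> D\<close> is a subset of \<open>D\<close> of one of at most
  \<open>w\<close> sizes, and each size accounts for at most a \<open>d\<close>-fraction of all subsets of \<open>D\<close>.\<close>

lemma card_window_le:
  assumes G: "finite G" "D \<subseteq> G"
    and W: "\<And>T. finite (W T)" "\<And>T. card (W T) \<le> w"
    and d: "\<And>l. real (card D choose l) \<le> d * 2 ^ card D"
  shows "real (card {S. S \<subseteq> G \<and> card (S \<inter> D) \<in> W (S - D)}) \<le> real w * d * 2 ^ card G"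
proof -
  have D: "finite D" using G finite_subset by blast
  have "0 < d * 2 ^ card D" using d[of 0] by simp
  then have "0 \<le> d" by (simp add: zero_less_mult_iff)
  let ?Sig = "SIGMA T:Pow (G - D). {U. U \<subseteq> D \<and> card U \<in> W T}"
  have fin: "finite ?Sig" using G(1) D by (intro finite_SigmaI) simp_all
  have "{S. S \<subseteq> G \<and> card (S \<inter> D) \<in> W (S - D)} \<subseteq> (\<lambda>(T, U). U \<union> T) ` ?Sig"
  proof
    fix S assume "S \<in> {S. S \<subseteq> G \<and> card (S \<inter> D) \<in> W (S - D)}"
    then have "(S - D, S \<inter> D) \<in> ?Sig" by auto
    moreover have "S = (\<lambda>(T, U). U \<union> T) (S - D, S \<inter> D)" by auto
    ultimately show "S \<in> (\<lambda>(T, U). U \<union> T) ` ?Sig" by blast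
  qed
  then have "card {S. S \<subseteq> G \<and> card (S \<inter> D) \<in> W (S - D)} \<le> card ((\<lambda>(T, U). U \<union> T) ` ?Sig)"
    by (rule card_mono[OF finite_imageI[OF fin]])
  also have "\<dots> \<le> card ?Sig" by (rule card_image_le[OF fin])
  also have "\<dots> = (\<Sum>T\<in>Pow (G - D). card {U. U \<subseteq> D \<and> card U \<in> W T})"
    using G(1) D by (intro card_SigmaI) simp_all
  finally have "real (card {S. S \<subseteq> G \<and> card (S \<inter> D) \<in> W (S - D)})
      \<le> (\<Sum>T\<in>Pow (G - D). real (card {U. U \<subseteq> D \<and> card U \<in> W T}))"
    by (simp flip: of_nat_sum)
  also have "\<dots> \<le> (\<Sum>T\<in>Pow (G - D). real w * d * 2 ^ card D)"
  proof (rule sum_mono)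
    fix T
    have "real (card {U. U \<subseteq> D \<and> card U \<in> W T}) \<le> (\<Sum>l\<in>W T. real (card D choose l))"
      using card_subsets_card_in[OF D W(1)] by (simp flip: of_nat_sum)
    also have "\<dots> \<le> (\<Sum>l\<in>W T. d * 2 ^ card D)" by (rule sum_mono[OF d])
    also have "\<dots> \<le> real w * d * 2 ^ card D"
      using W(2)[of T] \<open>0 \<le> d\<close> by (simp add: mult.assoc mult_right_mono)
    finally show "real (card {U. U \<subseteq> D \<and> card U \<in> W T}) \<le> real w * d * 2 ^ card D" .
  qed
  also have "\<dots> = real w * d * (2 ^ card D * 2 ^ (card G - card D))"
    using G D by (simp add: card_Pow card_Diff_subset)
  also have "\<dots> = real w * d * 2 ^ card G"
    using card_mono[OF G] by (simp flip: power_add)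
  finally show ?thesis .
qed

text \<open>A set \<open>S \<subseteq> G\<close> stands for the agent valuing exactly the goods in \<open>S\<close>; \<open>S \<in> EFc_sets G B k c i\<close>
  says that this agent, as a member of group \<open>i\<close>, finds the allocation with bundles \<open>B\<close> EF\<open>c\<close>.\<close>

definition EFc_sets :: "nat set \<Rightarrow> (nat \<Rightarrow> nat set) \<Rightarrow> nat \<Rightarrow> nat \<Rightarrow> nat \<Rightarrow> nat set set" where
  "EFc_sets G B k c i = {S. S \<subseteq> G \<and> (\<forall>i'<k. card (S \<inter> B i') \<le> card (S \<inter> B i) + c)}"

definition ambiguous_sets :: "nat set \<Rightarrow> (nat \<Rightarrow> nat set) \<Rightarrow> nat \<Rightarrow> nat \<Rightarrow> nat set set" where
  "ambiguous_sets G B k c =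
     {S. \<exists>i<k. \<exists>j<k. i \<noteq> j \<and> S \<in> EFc_sets G B k c i \<inter> EFc_sets G B k c j}"

lemma ambiguous_sets_subset:
  assumes G: "finite G" "\<And>i. B i \<subseteq> G"
    and disj: "\<And>i j. i \<noteq> j \<Longrightarrow> B i \<inter> B j = {}" and "p < k"
  shows "ambiguous_sets G B k c \<subseteq>
    (\<Union>i\<in>{i. i < k \<and> L \<le> card (B i)}. \<Union>j<k.
       {S. S \<subseteq> G \<and> card (S \<inter> B i) \<in> {card ((S - B i) \<inter> B j) - c .. card ((S - B i) \<inter> B j) + c}})
    \<union> {S. S \<subseteq> G \<and> card (S \<inter> B p) \<in> {..<L + c}}" (is "_ \<subseteq> ?Windows \<union> ?Small")
proof
  fix S assume "S \<in> ambiguous_sets G B k c"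
  then obtain i j where S: "S \<subseteq> G" "i < k" "j < k" "i \<noteq> j"
    and ij: "card (S \<inter> B j) \<le> card (S \<inter> B i) + c" and ji: "card (S \<inter> B i) \<le> card (S \<inter> B j) + c"
    and pi: "card (S \<inter> B p) \<le> card (S \<inter> B i) + c"
    using \<open>p < k\<close> unfolding ambiguous_sets_def EFc_sets_def by blast
  have "(S - B i) \<inter> B j = S \<inter> B j" "(S - B j) \<inter> B i = S \<inter> B i"
    using disj[OF S(4)] by blast+
  consider "L \<le> card (B i)" | "L \<le> card (B j)" | "card (B i) < L" by linarith
  then show "S \<in> ?Windows \<union> ?Small"
  proof cases
    case 1
    have "card (S \<inter> B i) \<in> {card ((S - B i) \<inter> B j) - c .. card ((S - B i) \<inter> B j) + c}"
      using ij ji \<open>(S - B i) \<inter> B j = S \<inter> B j\<close> by auto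
    then show ?thesis using 1 S by blast
  next
    case 2
    have "card (S \<inter> B j) \<in> {card ((S - B j) \<inter> B i) - c .. card ((S - B j) \<inter> B i) + c}"
      using ij ji \<open>(S - B j) \<inter> B i = S \<inter> B i\<close> by auto
    then show ?thesis using 2 S by blast
  next
    case 3
    have "finite (B i)" using G finite_subset by blast
    then have "card (S \<inter> B i) \<le> card (B i)" by (intro card_mono) auto
    then show ?thesis using 3 pi S by auto
  qed
qed

lemma card_ambiguous_sets_le:
  assumes G: "finite G" "\<And>i. B i \<subseteq> G"
    and disj: "\<And>i j. i \<noteq> j \<Longrightarrow> B i \<inter> B j = {}" and "p < k"
    and L: "\<And>n l. L \<le> n \<Longrightarrow> real (n choose l) \<le> d * 2 ^ n"
    and p: "\<And>l. real (card (B p) choose l) \<le> d' * 2 ^ card (B p)"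
  shows "real (card (ambiguous_sets G B k c))
    \<le> (real k * real k * (2 * real c + 1) * d + (real L + real c) * d') * 2 ^ card G"
proof -
  define I where "I = {i. i < k \<and> L \<le> card (B i)}"
  define Win where "Win i j =
    {S. S \<subseteq> G \<and> card (S \<inter> B i) \<in> {card ((S - B i) \<inter> B j) - c .. card ((S - B i) \<inter> B j) + c}}"
    for i j
  define Small where "Small = {S. S \<subseteq> G \<and> card (S \<inter> B p) \<in> {..<L + c}}"
  have fin: "finite I" "finite (Win i j)" "finite Small" for i j
    using G(1) by (auto simp: I_def Win_def Small_def)
  have "0 < d * 2 ^ L" using L[of L 0] by simp
  then have "0 \<le> d" by (simp add: zero_less_mult_iff)
  have Win: "real (card (Win i j)) \<le> (2 * real c + 1) * d * 2 ^ card G" if "i \<in> I" for i j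
  proof -
    have "real (card (Win i j)) \<le> real (2 * c + 1) * d * 2 ^ card G"
      unfolding Win_def using that
      by (intro card_window_le[OF G(1,2)]) (auto simp: I_def intro!: L)
    then show ?thesis by (simp add: add.commute)
  qed
  have Small: "real (card Small) \<le> real (L + c) * d' * 2 ^ card G"
    unfolding Small_def by (rule card_window_le[OF G(1,2) _ _ p]) auto
  have "ambiguous_sets G B k c \<subseteq> (\<Union>i\<in>I. \<Union>j<k. Win i j) \<union> Small"
    unfolding I_def Win_def Small_def by (rule ambiguous_sets_subset[OF G disj \<open>p < k\<close>])
  then have "card (ambiguous_sets G B k c) \<le> card ((\<Union>i\<in>I. \<Union>j<k. Win i j) \<union> Small)"
    using fin by (intro card_mono) auto
  also have "\<dots> \<le> card (\<Union>i\<in>I. \<Union>j<k. Win i j) + card Small"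
    by (rule card_Un_le)
  also have "card (\<Union>i\<in>I. \<Union>j<k. Win i j) \<le> (\<Sum>i\<in>I. \<Sum>j<k. card (Win i j))"
    by (intro order.trans[OF card_UN_le[OF fin(1)]] sum_mono card_UN_le) simp
  finally have "real (card (ambiguous_sets G B k c))
      \<le> (\<Sum>i\<in>I. \<Sum>j<k. real (card (Win i j))) + real (card Small)"
    by (simp flip: of_nat_sum)
  also have "(\<Sum>i\<in>I. \<Sum>j<k. real (card (Win i j)))
      \<le> (\<Sum>i\<in>I. \<Sum>j<k. (2 * real c + 1) * d * 2 ^ card G)"
    by (intro sum_mono Win)
  also have "\<dots> = real (card I) * real k * ((2 * real c + 1) * d * 2 ^ card G)"
    by simp
  also have "\<dots> \<le> real k * real k * ((2 * real c + 1) * d * 2 ^ card G)"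
    using card_mono[of "{..<k}" I] \<open>0 \<le> d\<close> by (intro mult_right_mono) (auto simp: I_def)
  finally show ?thesis using Small by (simp add: algebra_simps)
qed

lemma card_ambiguous_sets_eventually_less:
  assumes "0 < \<epsilon>"
  shows "\<exists>N. \<forall>G B p. finite G \<and> (\<forall>i. B i \<subseteq> G) \<and> (\<forall>i j. i \<noteq> j \<longrightarrow> B i \<inter> B j = {})
           \<and> p < k \<and> N \<le> card (B p) \<longrightarrow> real (card (ambiguous_sets G B k c)) < \<epsilon> * 2 ^ card G"
proof -
  define K where "K = real k * real k * (2 * real c + 1)"
  define d where "d = \<epsilon> / (2 * (K + 1))"
  have "0 \<le> K" by (simp add: K_def)
  then have "0 < d" using assms by (simp add: d_def)
  then obtain L where L: "\<forall>n\<ge>L. \<forall>l. real (n choose l) \<le> d * 2 ^ n"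
    using binomial_le_fraction_of_power2 by blast
  define d' where "d' = \<epsilon> / (2 * (real L + real c + 1))"
  have "0 < d'" using assms by (simp add: d'_def)
  then obtain N where N: "\<forall>n\<ge>N. \<forall>l. real (n choose l) \<le> d' * 2 ^ n"
    using binomial_le_fraction_of_power2 by blast
  have "K * d < \<epsilon> / 2" "(real L + real c) * d' < \<epsilon> / 2"
    using assms \<open>0 \<le> K\<close> by (simp_all add: d_def d'_def field_simps)
  then have less: "K * d + (real L + real c) * d' < \<epsilon>" by linarith
  show ?thesis
  proof (intro exI allI impI, elim conjE)
    fix G :: "nat set" and B :: "nat \<Rightarrow> nat set" and p :: nat
    assume "finite G" "\<forall>i. B i \<subseteq> G" "\<forall>i j. i \<noteq> j \<longrightarrow> B i \<inter> B j = {}" "p < k" "N \<le> card (B p)"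
    then have "real (card (ambiguous_sets G B k c)) \<le> (K * d + (real L + real c) * d') * 2 ^ card G"
      using L N unfolding K_def by (intro card_ambiguous_sets_le) auto
    also have "\<dots> < \<epsilon> * 2 ^ card G"
      using less by simp
    finally show "real (card (ambiguous_sets G B k c)) < \<epsilon> * 2 ^ card G" .
  qed
qed

lemma sum_card_le_card_add_overlap:
  assumes X: "finite X" "\<And>i. i < k \<Longrightarrow> F i \<subseteq> X"
  shows "(\<Sum>i<k. card (F i)) \<le> card X + k * card {x. \<exists>i<k. \<exists>j<k. i \<noteq> j \<and> x \<in> F i \<inter> F j}"
proof -
  define Shared where "Shared = {x. \<exists>i<k. \<exists>j<k. i \<noteq> j \<and> x \<in> F i \<inter> F j}"
  have "Shared \<subseteq> X" using X(2) by (auto simp: Shared_def)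
  then have fin: "finite Shared" "\<And>i. i < k \<Longrightarrow> finite (F i)"
    using X finite_subset by blast+
  have "(\<Sum>i<k. card (F i)) = (\<Sum>i<k. card (F i - Shared) + card (F i \<inter> Shared))"
    using fin(2) by (intro sum.cong refl) (metis card_Int_Diff add.commute lessThan_iff)
  also have "\<dots> = (\<Sum>i<k. card (F i - Shared)) + (\<Sum>i<k. card (F i \<inter> Shared))"
    by (rule sum.distrib)
  also have "(\<Sum>i<k. card (F i - Shared)) = card (\<Union>i<k. F i - Shared)"
  proof (rule card_UN_disjoint[symmetric])
    show "\<forall>i\<in>{..<k}. \<forall>j\<in>{..<k}. i \<noteq> j \<longrightarrow> (F i - Shared) \<inter> (F j - Shared) = {}"
      unfolding Shared_def by blast
  qed (use fin(2) in auto)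
  also have "\<dots> \<le> card X"
    using X by (intro card_mono) auto
  also have "(\<Sum>i<k. card (F i \<inter> Shared)) \<le> (\<Sum>i<k. card Shared)"
    using fin(1) by (intro sum_mono card_mono) auto
  finally show ?thesis by (simp add: Shared_def)
qed

definition subset_agents :: "nat set \<Rightarrow> nat \<Rightarrow> nat set" where
  "subset_agents G i = set_encode ` Pow G"

definition subset_utility :: "nat \<Rightarrow> nat \<Rightarrow> nat \<Rightarrow> nat" where
  "subset_utility i a g = (if g \<in> set_decode a then 1 else 0)"

lemma binary_instance_subset_agents:
  "finite G \<Longrightarrow> binary_instance G k (subset_agents G) subset_utility"
  by (auto simp: binary_instance_def subset_agents_def subset_utility_def)

lemma card_subset_agents: "finite G \<Longrightarrow> card (subset_agents G i) = 2 ^ card G"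
  unfolding subset_agents_def
  by (subst card_image) (auto simp: card_Pow intro: inj_on_subset[OF inj_on_set_encode] finite_subset)

lemma sum_subset_utility:
  assumes "finite S" "finite X"
  shows "sum (subset_utility i (set_encode S)) X = card (X \<inter> S)"
  using assms by (simp add: subset_utility_def sum.If_cases Int_def)

lemma EFc_agent_subset_utility_imp_EFc_sets:
  assumes G: "finite G" and S: "S \<subseteq> G"
    and EFc: "EFc_agent G k subset_utility alloc c i (set_encode S)"
  shows "S \<in> EFc_sets G (grp_bundle G alloc) k c i"
proof -
  let ?B = "grp_bundle G alloc"
  have fin: "finite S" "\<And>i. finite (?B i)"
    using G S finite_subset by (auto simp: grp_bundle_def)
  have "card (S \<inter> ?B i') \<le> card (S \<inter> ?B i) + c" if "i' < k" for i'
  proof -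
    obtain C where C: "C \<subseteq> ?B i'" "card C \<le> c"
      "sum (subset_utility i (set_encode S)) (?B i' - C) \<le> sum (subset_utility i (set_encode S)) (?B i)"
      using EFc \<open>i' < k\<close> unfolding EFc_agent_def by blast
    have "card (S \<inter> ?B i') \<le> card ((?B i' - C) \<inter> S \<union> C)"
      using fin C(1) by (intro card_mono) (auto intro: finite_subset)
    also have "\<dots> \<le> card ((?B i' - C) \<inter> S) + card C" by (rule card_Un_le)
    also have "card ((?B i' - C) \<inter> S) \<le> card (?B i \<inter> S)"
      using C(3) fin by (simp add: sum_subset_utility)
    finally show ?thesis using C(2) by (simp add: Int_commute)
  qed
  then show ?thesis using S by (simp add: EFc_sets_def)
qed

lemma card_EFc_agents_le_card_EFc_sets:
  assumes "finite G"
  shows "card {a \<in> subset_agents G i. EFc_agent G k subset_utility alloc c i a}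
    \<le> card (EFc_sets G (grp_bundle G alloc) k c i)"
proof -
  have "{a \<in> subset_agents G i. EFc_agent G k subset_utility alloc c i a}
      \<subseteq> set_encode ` EFc_sets G (grp_bundle G alloc) k c i"
    using EFc_agent_subset_utility_imp_EFc_sets[OF assms]
    by (auto simp: subset_agents_def)
  moreover have "finite (EFc_sets G (grp_bundle G alloc) k c i)"
    using assms by (auto simp: EFc_sets_def)
  ultimately show ?thesis
    by (meson card_image_le card_mono finite_imageI le_trans)
qed

lemma h_democratic_EFc_subset_agents_imp_card_EFc_sets:
  assumes G: "finite G" and "h_democratic_EFc G k (subset_agents G) subset_utility h c alloc" "i < k"
  shows "h * 2 ^ card G \<le> real (card (EFc_sets G (grp_bundle G alloc) k c i))"
proof -
  have "h * 2 ^ card G = h * real (card (subset_agents G i))"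
    using card_subset_agents[OF G] by simp
  also have "\<dots> \<le> real (card {a \<in> subset_agents G i. EFc_agent G k subset_utility alloc c i a})"
    using assms(2,3) unfolding h_democratic_EFc_def by blast
  also have "\<dots> \<le> real (card (EFc_sets G (grp_bundle G alloc) k c i))"
    using card_EFc_agents_le_card_EFc_sets[OF G] by simp
  finally show ?thesis .
qed

lemma h_democratic_EFc_subset_agents_imp_card_ambiguous_sets:
  assumes G: "finite G" and democratic: "h_democratic_EFc G k (subset_agents G) subset_utility h c alloc"
  shows "real k * h * 2 ^ card G
    \<le> 2 ^ card G + real k * real (card (ambiguous_sets G (grp_bundle G alloc) k c))"
proof -
  let ?B = "grp_bundle G alloc"
  have "(\<Sum>i<k. card (EFc_sets G ?B k c i)) \<le> card (Pow G) + k * card (ambiguous_sets G ?B k c)"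
    unfolding ambiguous_sets_def
    by (rule sum_card_le_card_add_overlap) (auto simp: G EFc_sets_def)
  then have sum: "real (\<Sum>i<k. card (EFc_sets G ?B k c i))
      \<le> real (2 ^ card G + k * card (ambiguous_sets G ?B k c))"
    using G by (simp only: card_Pow of_nat_le_iff)
  have "real k * h * 2 ^ card G = (\<Sum>i<k. h * 2 ^ card G)" by simp
  also have "\<dots> \<le> (\<Sum>i<k. real (card (EFc_sets G ?B k c i)))"
    using h_democratic_EFc_subset_agents_imp_card_EFc_sets[OF G democratic] by (intro sum_mono) simp
  also have "\<dots> \<le> 2 ^ card G + real k * real (card (ambiguous_sets G ?B k c))"
    using sum by simp
  finally show ?thesis .
qed

lemma grp_bundle_subset: "grp_bundle G alloc i \<subseteq> G"
  by (auto simp: grp_bundle_def)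

lemma grp_bundle_disjoint: "i \<noteq> j \<Longrightarrow> grp_bundle G alloc i \<inter> grp_bundle G alloc j = {}"
  by (auto simp: grp_bundle_def)

lemma exists_large_grp_bundle:
  assumes "is_allocation G k alloc" "finite G" "0 < k" "k * N \<le> card G"
  shows "\<exists>p<k. N \<le> card (grp_bundle G alloc p)"
proof (rule ccontr)
  assume "\<not> ?thesis"
  then have small: "card (grp_bundle G alloc p) < N" if "p < k" for p
    using that by auto
  have "G \<subseteq> (\<Union>p<k. grp_bundle G alloc p)"
    using assms(1) by (auto simp: is_allocation_def grp_bundle_def)
  then have "card G \<le> card (\<Union>p<k. grp_bundle G alloc p)"
    using assms(2) by (intro card_mono) (auto simp: grp_bundle_def)
  also have "\<dots> \<le> (\<Sum>p<k. card (grp_bundle G alloc p))"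
    by (rule card_UN_le) simp
  also have "\<dots> < k * N"
    using sum_strict_mono[of "{..<k}", OF _ _ small] assms(3) by (simp add: lessThan_empty_iff)
  finally show False using assms(4) by simp
qed

theorem mainTheorem15:
  fixes k c :: nat and h :: real
  assumes "k \<ge> 2" and "c \<ge> 1" and "h > 1 / real k"
  shows "\<exists>G A u. binary_instance G k A u \<and>
           \<not> (\<exists>alloc. is_allocation G k alloc \<and> h_democratic_EFc G k A u h c alloc)"
proof -
  have "0 < h - 1 / real k" using assms(3) by simp
  then obtain N where N: "\<forall>G B p. finite G \<and> (\<forall>i. B i \<subseteq> G) \<and> (\<forall>i j. i \<noteq> j \<longrightarrow> B i \<inter> B j = {})
      \<and> p < k \<and> N \<le> card (B p) \<longrightarrow> real (card (ambiguous_sets G B k c)) < (h - 1 / real k) * 2 ^ card G"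
    using card_ambiguous_sets_eventually_less by blast
  define G where "G = {..<k * N}"
  have G: "finite G" "card G = k * N" by (simp_all add: G_def)
  have "\<not> h_democratic_EFc G k (subset_agents G) subset_utility h c alloc"
    if alloc: "is_allocation G k alloc" for alloc
  proof
    assume "h_democratic_EFc G k (subset_agents G) subset_utility h c alloc"
    let ?A = "real (card (ambiguous_sets G (grp_bundle G alloc) k c))" and ?M = "(2::real) ^ card G"
    have "real k * h * ?M \<le> ?M + real k * ?A"
      by (rule h_democratic_EFc_subset_agents_imp_card_ambiguous_sets[OF G(1)]) fact
    moreover obtain p where "p < k" "N \<le> card (grp_bundle G alloc p)"
      using exists_large_grp_bundle[OF alloc G(1)] assms(1) G(2) by auto
    with G(1) have "?A < (h - 1 / real k) * ?M"
      using grp_bundle_subset grp_bundle_disjoint by (intro N[rule_format]) blast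
    then have "real k * ?A < real k * h * ?M - ?M"
      using assms(1) by (simp add: field_simps)
    ultimately show False by linarith
  qed
  then show ?thesis
    using binary_instance_subset_agents[OF G(1)] by blast
qed

end
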